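(* Consider the following $n$-round process. In each round $i$, an adversary chooses a probability distribution $\mathcal{D}_i$ on $[0,1]$, possibly depending on the first $i-1$ rounds, and a sample $R_i\sim\mathcal{D}_i$ is drawn. Let $Z_1=1$ and $Z_{i+1}=Z_i-R_iZ_i$ for $i\ge1$, and let $Y=\sum_{i=1}^n Z_i\,\mathbb{E}[R_i]$, where $\mathbb{E}[R_i]$ denotes the mean of $\mathcal{D}_i$. Then for every real $q$ and every adversary strategy, $\Pr[Y>q]\le e\cdot\exp(-q)$. *)

theory Defs
  imports "HOL-Probability.Probability"
begin

text \<open>Histories of samples: sample of round i (0-indexed) is stored at coordinate i;
  coordinates of rounds not yet played are 0.\<close>
definition histM :: "(nat \<Rightarrow> real) measure" where
  "histM = PiM UNIV (\<lambda>_. borel)"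

definition trunc :: "nat \<Rightarrow> (nat \<Rightarrow> real) \<Rightarrow> (nat \<Rightarrow> real)" where
  "trunc i h = (\<lambda>j. if j < i then h j else 0)"

text \<open>An adversary strategy D: in round i (0-indexed), given the history h, it chooses
  the distribution D i h on the reals (required to be supported on [0,1]).
  proc D i is the joint distribution of the history after i rounds.\<close>
fun proc :: "(nat \<Rightarrow> (nat \<Rightarrow> real) \<Rightarrow> real measure) \<Rightarrow> nat \<Rightarrow> (nat \<Rightarrow> real) measure" where
  "proc D 0 = return histM (\<lambda>_. 0)"
| "proc D (Suc i) = bind (proc D i) (\<lambda>h. bind (D i (trunc i h)) (\<lambda>r. return histM (h(i := r))))"

text \<open>Z h 0 = 1 (Z_1 in the paper), Z h (i+1) = Z h i - R_i Z h i.\<close>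
fun Zseq :: "(nat \<Rightarrow> real) \<Rightarrow> nat \<Rightarrow> real" where
  "Zseq h 0 = 1"
| "Zseq h (Suc i) = Zseq h i - h i * Zseq h i"

definition meanR :: "(nat \<Rightarrow> (nat \<Rightarrow> real) \<Rightarrow> real measure) \<Rightarrow> nat \<Rightarrow> (nat \<Rightarrow> real) \<Rightarrow> real" where
  "meanR D i h = integral\<^sup>L (D i (trunc i h)) (\<lambda>x. x)"

definition Yval :: "(nat \<Rightarrow> (nat \<Rightarrow> real) \<Rightarrow> real measure) \<Rightarrow> nat \<Rightarrow> (nat \<Rightarrow> real) \<Rightarrow> real" where
  "Yval D n h = (\<Sum>i<n. Zseq h i * meanR D i h)"

end

theory Submission
  imports Defs
begin

text \<open>A supermartingale argument. With y the partial sum of Y and z the current weight Z_i,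
  the potential \<Phi>(y, z) = 1 for y > q and min 1 (exp (1 - (q - y) / z)) otherwise satisfies
  E[\<Phi>(y + z \<mu>, z (1 - R))] \<le> \<Phi>(y, z) for every distribution of R on [0,1] with mean \<mu>:
  for v = (q - y) / z - \<mu>, the left-hand integrand is dominated by a linear function c (1 - R)
  whose mean c (1 - \<mu>) is at most exp (1 - \<mu> - v) = \<Phi>(y, z). Hence the expected final
  potential, which dominates Pr[Y > q], is at most \<Phi>(0, 1) \<le> e \<cdot> exp (-q).\<close>

section \<open>The potential and its one-round supermartingale property\<close>

definition potential :: "real \<Rightarrow> real \<Rightarrow> real \<Rightarrow> real" where
  "potential q y z =
     (if q < y then 1 else if z \<le> 0 then 0 else min 1 (exp (1 - (q - y) / z)))"

lemma potential_le_1: "potential q y z \<le> 1"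
  by (simp add: potential_def)

lemma borel_measurable_potential[measurable]:
  assumes [measurable]: "f \<in> borel_measurable M" "g \<in> borel_measurable M"
  shows "(\<lambda>x. potential q (f x) (g x)) \<in> borel_measurable M"
  unfolding potential_def by measurable

definition majorant_slope :: "real \<Rightarrow> real" where
  "majorant_slope v = (if v \<le> 1 then 1 / v else exp (1 - v))"

lemma majorant_slope_nonneg: "0 < v \<Longrightarrow> 0 \<le> majorant_slope v"
  by (simp add: majorant_slope_def)

lemma min_1_exp_le_majorant_slope:
  assumes v: "0 < v" and w: "0 < w" "w \<le> 1"
  shows "min 1 (exp (1 - v / w)) \<le> majorant_slope v * w"
proof (cases "v \<le> 1")
  case v1: True
  show ?thesis
  proof (cases "v \<le> w")
    case True
    then have "1 \<le> w / v" using v by simp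
    then show ?thesis using v1 by (simp add: majorant_slope_def)
  next
    case False
    define t where "t = v / w"
    have "1 < t" using False w v by (simp add: t_def)
    moreover have "t \<le> exp (t - 1)" using exp_ge_add_one_self[of "t - 1"] by simp
    ultimately have "exp (1 - t) \<le> 1 / t"
      by (simp add: exp_diff field_simps)
    also have "1 / t = w / v" using v w by (simp add: t_def)
    finally have "exp (1 - t) \<le> w / v" .
    then show ?thesis using v1 by (simp add: majorant_slope_def t_def min_le_iff_disj)
  qed
next
  case False
  have "1 - 1 / w \<le> ln w"
    using ln_le_minus_one[of "1 / w"] w by (simp add: ln_div)
  moreover have "v * (1 - 1 / w) \<le> 1 - 1 / w"
    using mult_right_mono_neg[of 1 v "1 - 1 / w"] False w by simp
  ultimately have "v - v / w \<le> ln w" by (simp add: algebra_simps)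
  then have "exp (v - v / w) \<le> w"
    using w by (metis exp_le_cancel_iff exp_ln)
  then have "exp (1 - v) * exp (v - v / w) \<le> exp (1 - v) * w"
    by (intro mult_left_mono) auto
  then have "exp (1 - v / w) \<le> exp (1 - v) * w"
    by (simp add: mult_exp_exp)
  then show ?thesis using False by (simp add: majorant_slope_def min_le_iff_disj)
qed

lemma majorant_slope_mult_le_exp:
  assumes "0 \<le> m" "m < v"
  shows "majorant_slope v * m \<le> exp (m - v)"
proof (cases "v \<le> 1")
  case True
  show ?thesis
  proof (cases "m = 0")
    case False
    then have m: "0 < m" and v: "0 < v" using assms by simp_all
    have "1 - m / v \<le> ln (v / m)"
      using ln_le_minus_one[of "m / v"] m v by (simp add: ln_div)
    moreover have "v - m \<le> 1 - m / v"
    proof -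
      have "(v - m) * v \<le> (v - m) * 1" using True assms by (intro mult_left_mono) auto
      then show ?thesis using v by (simp add: field_simps)
    qed
    ultimately have "exp (v - m) \<le> v / m"
      using m v by (metis exp_ln exp_le_cancel_iff order_trans divide_pos_pos)
    then have "m / v \<le> exp (m - v)"
      using m v by (simp add: exp_diff field_simps)
    then show ?thesis using True by (simp add: majorant_slope_def)
  qed simp
next
  case False
  have "m \<le> exp (m - 1)" using exp_ge_add_one_self[of "m - 1"] by simp
  then have "exp (1 - v) * m \<le> exp (1 - v) * exp (m - 1)" by simp
  then show ?thesis using False by (simp add: majorant_slope_def mult_exp_exp)
qed

lemma potential_step_le_linear:
  assumes z: "0 < z" and r: "0 \<le> r" "r \<le> 1" and \<mu>: "z * \<mu> < q - y"
  shows "potential q (y + z * \<mu>) (z - r * z) \<le> majorant_slope ((q - y) / z - \<mu>) * (1 - r)"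
proof -
  define v where "v = (q - y) / z - \<mu>"
  have v: "0 < v" using z \<mu> by (simp add: v_def field_simps)
  have not_above: "\<not> q < y + z * \<mu>" using \<mu> by linarith
  show ?thesis
  proof (cases "r = 1")
    case True
    then show ?thesis using not_above by (simp add: potential_def)
  next
    case False
    then have w: "0 < 1 - r" using r by simp
    have "0 < z * (1 - r)" using w z by simp
    moreover have "(q - (y + z * \<mu>)) / (z - r * z) = v / (1 - r)"
      using z w by (simp add: v_def field_simps)
    ultimately have "potential q (y + z * \<mu>) (z - r * z) = min 1 (exp (1 - v / (1 - r)))"
      using not_above by (simp add: potential_def algebra_simps)
    also have "\<dots> \<le> majorant_slope v * (1 - r)"
      using v w r by (intro min_1_exp_le_majorant_slope) auto
    finally show ?thesis by (simp add: v_def)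
  qed
qed

lemma nn_integral_potential_le_1:
  assumes "prob_space P"
  shows "(\<integral>\<^sup>+ r. ennreal (potential q (f r) (g r)) \<partial>P) \<le> 1"
proof -
  have "(\<integral>\<^sup>+ r. ennreal (potential q (f r) (g r)) \<partial>P) \<le> (\<integral>\<^sup>+ r. 1 \<partial>P)"
    by (intro nn_integral_mono) (simp add: potential_le_1)
  also have "\<dots> = 1" using assms by (simp add: prob_space.emeasure_space_1)
  finally show ?thesis .
qed

lemma nn_integral_potential_step_le:
  fixes P :: "real measure"
  assumes P: "prob_space P" "sets P = sets borel" and ae: "AE r in P. 0 \<le> r \<and> r \<le> 1"
    and z: "0 \<le> z" "z \<le> 1"
  shows "(\<integral>\<^sup>+ r. ennreal (potential q (y + z * (\<integral>x. x \<partial>P)) (z - r * z)) \<partial>P)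
           \<le> ennreal (potential q y z)"
proof -
  interpret prob_space P by fact
  have [measurable]: "(\<lambda>x. x) \<in> borel_measurable P" using P(2) by (rule measurable_ident_sets)
  define \<mu> where "\<mu> = (\<integral>x. x \<partial>P)"
  have int: "integrable P (\<lambda>x. x)"
    by (rule integrable_const_bound[where B=1]) (use ae in auto)
  have \<mu>1: "\<mu> \<le> 1"
  proof -
    have "\<mu> \<le> (\<integral>x. 1 \<partial>P)" unfolding \<mu>_def
      by (rule integral_mono_AE) (use ae int in auto)
    then show ?thesis by (simp add: prob_space)
  qed
  have le_1: "(\<integral>\<^sup>+ r. ennreal (potential q (y + z * \<mu>) (z - r * z)) \<partial>P) \<le> 1"
    by (rule nn_integral_potential_le_1) (rule prob_space_axioms)
  consider "q < y" | "z = 0" "\<not> q < y" | "0 < z" "q - y \<le> z" | "0 < z" "z < q - y"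
    using z by linarith
  then show ?thesis
  proof cases
    case 1
    then show ?thesis using le_1 by (simp add: potential_def \<mu>_def)
  next
    case 2
    then show ?thesis by (simp add: potential_def)
  next
    case 3
    then have "potential q y z = 1" by (simp add: potential_def)
    then show ?thesis using le_1 by (simp add: \<mu>_def)
  next
    case 4
    define v where "v = (q - y) / z - \<mu>"
    have u: "1 < (q - y) / z" using 4 by simp
    have \<mu>_lt: "z * \<mu> < q - y"
      using 4 \<mu>1 mult_left_le[of \<mu> z] by linarith
    have "(\<integral>\<^sup>+ r. ennreal (potential q (y + z * \<mu>) (z - r * z)) \<partial>P)
          \<le> (\<integral>\<^sup>+ r. ennreal (majorant_slope v * (1 - r)) \<partial>P)"
      using ae 4 \<mu>_lt
      by (intro nn_integral_mono_AE) (auto simp: v_def intro!: ennreal_leI potential_step_le_linear)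
    also have "\<dots> = ennreal (\<integral>r. majorant_slope v * (1 - r) \<partial>P)"
    proof (rule nn_integral_eq_integral)
      have "0 < v" using 4 \<mu>_lt by (simp add: v_def field_simps)
      then show "AE r in P. 0 \<le> majorant_slope v * (1 - r)"
        using ae majorant_slope_nonneg by auto
    qed (use int in simp)
    also have "(\<integral>r. majorant_slope v * (1 - r) \<partial>P) = majorant_slope v * (1 - \<mu>)"
      using int by (simp add: \<mu>_def prob_space)
    also have "\<dots> \<le> exp ((1 - \<mu>) - v)"
      using \<mu>1 u by (intro majorant_slope_mult_le_exp) (auto simp: v_def)
    also have "exp ((1 - \<mu>) - v) = potential q y z"
      using 4 u by (simp add: potential_def v_def)
    finally show ?thesis unfolding \<mu>_def by (simp add: ennreal_leI)
  qed
qed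

lemma space_histM[simp]: "space histM = UNIV"
  by (simp add: histM_def space_PiM)

lemma measurable_trunc[measurable]: "trunc i \<in> histM \<rightarrow>\<^sub>M histM"
  unfolding histM_def trunc_def by (rule measurable_PiM_single') auto

lemma measurable_histM_component[measurable]: "(\<lambda>h. h i) \<in> borel_measurable histM"
  unfolding histM_def by measurable

lemma borel_measurable_Zseq[measurable]: "(\<lambda>h. Zseq h i) \<in> borel_measurable histM"
  by (induction i) simp_all

lemma Zseq_fun_upd: "i \<le> k \<Longrightarrow> Zseq (h(k := r)) i = Zseq h i"
  by (induction i) auto

lemma trunc_fun_upd: "i \<le> k \<Longrightarrow> trunc i (h(k := r)) = trunc i h"
  by (auto simp: trunc_def)

lemma Yval_Suc_fun_upd: "Yval D (Suc k) (h(k := r)) = Yval D k h + Zseq h k * meanR D k h"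
  by (simp add: Yval_def meanR_def Zseq_fun_upd trunc_fun_upd)

lemma Zseq_nonneg_le_1:
  assumes "\<forall>i<k. 0 \<le> h i \<and> h i \<le> 1"
  shows "0 \<le> Zseq h k \<and> Zseq h k \<le> 1"
  using assms
proof (induction k)
  case (Suc k)
  then have "0 \<le> Zseq h k" "Zseq h k \<le> 1" "0 \<le> h k" "h k \<le> 1" by auto
  moreover have "Zseq h (Suc k) = Zseq h k * (1 - h k)" by (simp add: algebra_simps)
  ultimately show ?case by (simp add: mult_le_one)
qed simp

text \<open>Histories leaving [0,1] in an earlier round get potential \<infinity>: they are null under
  the process, and this makes the one-round inequality hold for every history, not just almost
  every one.\<close>
definition hist_potential ::
    "(nat \<Rightarrow> (nat \<Rightarrow> real) \<Rightarrow> real measure) \<Rightarrow> real \<Rightarrow> nat \<Rightarrow> (nat \<Rightarrow> real) \<Rightarrow> ennreal" where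
  "hist_potential D q k h =
     (if \<forall>i<k. 0 \<le> h i \<and> h i \<le> 1 then ennreal (potential q (Yval D k h) (Zseq h k)) else \<infinity>)"

section \<open>The process is a supermartingale for the potential\<close>

locale adversary =
  fixes D :: "nat \<Rightarrow> (nat \<Rightarrow> real) \<Rightarrow> real measure" and n :: nat
  assumes kernel: "\<And>i. i < n \<Longrightarrow> D i \<in> histM \<rightarrow>\<^sub>M prob_algebra borel"
    and supp: "\<And>i h. i < n \<Longrightarrow> h \<in> space histM \<Longrightarrow> AE x in D i h. 0 \<le> x \<and> x \<le> 1"
begin

definition round_kernel :: "nat \<Rightarrow> (nat \<Rightarrow> real) \<Rightarrow> (nat \<Rightarrow> real) measure" where
  "round_kernel k h = bind (D k (trunc k h)) (\<lambda>r. return histM (h(k := r)))"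

lemma proc_Suc_round_kernel: "proc D (Suc k) = bind (proc D k) (round_kernel k)"
  by (simp add: round_kernel_def[abs_def])

lemma prob_space_D: "i < n \<Longrightarrow> prob_space (D i h) \<and> sets (D i h) = sets borel"
  using measurable_space[OF kernel, of i h] by (simp add: space_prob_algebra)

lemma measurable_D_trunc: "i < n \<Longrightarrow> (\<lambda>h. D i (trunc i h)) \<in> histM \<rightarrow>\<^sub>M subprob_algebra borel"
  using measurable_compose[OF measurable_trunc measurable_prob_algebraD[OF kernel]] by simp

lemma borel_measurable_Yval: "k \<le> n \<Longrightarrow> Yval D k \<in> borel_measurable histM"
proof -
  assume k: "k \<le> n"
  have "(\<lambda>h. meanR D i h) \<in> borel_measurable histM" if "i < n" for i
    unfolding meanR_def using that
    by (intro measurable_compose[OF measurable_D_trunc integral_measurable_subprob_algebra])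
      (auto intro: measurable_ident_sets)
  then show ?thesis
    unfolding Yval_def using k by (intro borel_measurable_sum borel_measurable_times) auto
qed

lemma borel_measurable_hist_potential:
  assumes "k \<le> n"
  shows "hist_potential D q k \<in> borel_measurable histM"
proof -
  note [measurable] = borel_measurable_Yval[OF assms]
  show ?thesis unfolding hist_potential_def by measurable
qed

lemma measurable_round_kernel: "k < n \<Longrightarrow> round_kernel k \<in> histM \<rightarrow>\<^sub>M subprob_algebra histM"
  unfolding round_kernel_def
proof (rule measurable_bind'[OF measurable_D_trunc])
  have "(\<lambda>(h, r). h(k := r)) \<in> histM \<Otimes>\<^sub>M borel \<rightarrow>\<^sub>M histM"
    using measurable_add_dim[of k UNIV "\<lambda>_. borel"] by (simp add: histM_def insert_UNIV)
  from measurable_compose[OF this return_measurable]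
  show "(\<lambda>(h, r). return histM (h(k := r))) \<in> histM \<Otimes>\<^sub>M borel \<rightarrow>\<^sub>M subprob_algebra histM"
    by (simp add: case_prod_unfold)
qed

lemma sets_round_kernel: "k < n \<Longrightarrow> sets (round_kernel k h) = sets histM"
  unfolding round_kernel_def using prob_space_D[of k "trunc k h"]
  by (subst sets_bind[where N=histM]) (auto simp: prob_space.not_empty sets_eq_imp_space_eq)

lemma sets_proc: "k \<le> n \<Longrightarrow> sets (proc D k) = sets histM"
proof (induction k)
  case (Suc k)
  then have "sets (proc D k) = sets histM" by simp
  from sets_eq_imp_space_eq[OF this] have "space (proc D k) \<noteq> {}" by simp
  then show ?case unfolding proc_Suc_round_kernel using sets_round_kernel Suc.prems
    by (subst sets_bind[where N=histM]) auto
qed simp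

lemma nn_integral_round_kernel_le:
  assumes k: "k < n"
  shows "(\<integral>\<^sup>+ h'. hist_potential D q (Suc k) h' \<partial>round_kernel k h) \<le> hist_potential D q k h"
proof (cases "\<forall>i<k. 0 \<le> h i \<and> h i \<le> 1")
  case False
  then have "hist_potential D q k h = \<infinity>" by (auto simp: hist_potential_def)
  then show ?thesis by simp
next
  case good: True
  define P where "P = D k (trunc k h)"
  have P: "prob_space P" "sets P = sets borel" using prob_space_D[OF k] by (auto simp: P_def)
  have ae: "AE r in P. 0 \<le> r \<and> r \<le> 1" unfolding P_def by (rule supp[OF k]) simp
  have ret: "(\<lambda>r. return histM (h(k := r))) \<in> P \<rightarrow>\<^sub>M subprob_algebra histM"
  proof (rule measurable_compose[OF _ return_measurable])
    show "(\<lambda>r. h(k := r)) \<in> P \<rightarrow>\<^sub>M histM"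
      unfolding measurable_cong_sets[OF P(2) refl] histM_def
      by (rule measurable_fun_upd[where J=UNIV]) (auto simp: space_PiM)
  qed
  have "(\<integral>\<^sup>+ h'. hist_potential D q (Suc k) h' \<partial>round_kernel k h)
      = (\<integral>\<^sup>+ r. \<integral>\<^sup>+ h'. hist_potential D q (Suc k) h' \<partial>return histM (h(k := r)) \<partial>P)"
    unfolding round_kernel_def P_def[symmetric] using k
    by (intro nn_integral_bind[OF borel_measurable_hist_potential ret]) simp
  also have "\<dots> = (\<integral>\<^sup>+ r. hist_potential D q (Suc k) (h(k := r)) \<partial>P)"
    using k by (intro nn_integral_cong nn_integral_return borel_measurable_hist_potential) auto
  also have "\<dots> = (\<integral>\<^sup>+ r. ennreal (potential q (Yval D k h + Zseq h k * (\<integral>x. x \<partial>P))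
                                     (Zseq h k - r * Zseq h k)) \<partial>P)"
    using ae
  proof (intro nn_integral_cong_AE, eventually_elim)
    case (elim r)
    with good have "\<forall>i<Suc k. 0 \<le> (h(k := r)) i \<and> (h(k := r)) i \<le> 1"
      by (simp add: less_Suc_eq)
    then show ?case
      by (simp add: hist_potential_def Yval_Suc_fun_upd Zseq_fun_upd meanR_def P_def)
  qed
  also have "\<dots> \<le> ennreal (potential q (Yval D k h) (Zseq h k))"
    using Zseq_nonneg_le_1[OF good] ae P by (intro nn_integral_potential_step_le) auto
  also have "\<dots> = hist_potential D q k h" using good by (simp add: hist_potential_def)
  finally show ?thesis .
qed

lemma nn_integral_proc_Suc_le:
  assumes k: "k < n"
  shows "(\<integral>\<^sup>+ h. hist_potential D q (Suc k) h \<partial>proc D (Suc k))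
           \<le> (\<integral>\<^sup>+ h. hist_potential D q k h \<partial>proc D k)"
proof -
  have "round_kernel k \<in> proc D k \<rightarrow>\<^sub>M subprob_algebra histM"
    using measurable_round_kernel[OF k] measurable_cong_sets[OF sets_proc refl, of k "subprob_algebra histM"] k by simp
  then have "(\<integral>\<^sup>+ h. hist_potential D q (Suc k) h \<partial>proc D (Suc k))
      = (\<integral>\<^sup>+ h. \<integral>\<^sup>+ h'. hist_potential D q (Suc k) h' \<partial>round_kernel k h \<partial>proc D k)"
    unfolding proc_Suc_round_kernel using k
    by (intro nn_integral_bind[OF borel_measurable_hist_potential]) simp_all
  also have "\<dots> \<le> (\<integral>\<^sup>+ h. hist_potential D q k h \<partial>proc D k)"
    by (intro nn_integral_mono nn_integral_round_kernel_le k)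
  finally show ?thesis .
qed

lemma nn_integral_proc_le:
  assumes "k \<le> n"
  shows "(\<integral>\<^sup>+ h. hist_potential D q k h \<partial>proc D k) \<le> ennreal (exp 1 * exp (- q))"
  using assms
proof (induction k)
  case 0
  have "potential q 0 1 \<le> exp (1 - q)"
    by (cases "q < 0") (simp_all add: potential_def)
  moreover have "(\<integral>\<^sup>+ h. hist_potential D q 0 h \<partial>proc D 0) = hist_potential D q 0 (\<lambda>_. 0)"
    using borel_measurable_hist_potential[of 0] by (simp add: nn_integral_return)
  moreover have "hist_potential D q 0 (\<lambda>_. 0) = ennreal (potential q 0 1)"
    by (simp add: hist_potential_def Yval_def)
  ultimately show ?case by (simp add: mult_exp_exp ennreal_leI)
next
  case (Suc k)
  then show ?case using nn_integral_proc_Suc_le[of k] by (meson Suc_leD Suc_le_lessD order_trans)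
qed

end

theorem mainTheorem15:
  fixes D :: "nat \<Rightarrow> (nat \<Rightarrow> real) \<Rightarrow> real measure"
    and n :: nat and q :: real
  assumes kernel: "\<And>i. i < n \<Longrightarrow> D i \<in> histM \<rightarrow>\<^sub>M prob_algebra borel"
    and supp: "\<And>i h. i < n \<Longrightarrow> h \<in> space histM \<Longrightarrow> AE x in D i h. 0 \<le> x \<and> x \<le> 1"
  shows "measure (proc D n) {h \<in> space (proc D n). Yval D n h > q} \<le> exp 1 * exp (- q)"
proof -
  interpret adversary D n using kernel supp by unfold_locales
  define A where "A = {h \<in> space (proc D n). Yval D n h > q}"
  have "emeasure (proc D n) A \<le> (\<integral>\<^sup>+ h. hist_potential D q n h \<partial>proc D n)"
  proof (cases "A \<in> sets (proc D n)")
    case True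
    then have "emeasure (proc D n) A = (\<integral>\<^sup>+ h. indicator A h \<partial>proc D n)" by simp
    also have "\<dots> \<le> (\<integral>\<^sup>+ h. hist_potential D q n h \<partial>proc D n)"
      by (intro nn_integral_mono) (auto simp: A_def hist_potential_def potential_def indicator_def)
    finally show ?thesis .
  qed (simp add: emeasure_notin_sets)
  also have "\<dots> \<le> ennreal (exp 1 * exp (- q))" by (rule nn_integral_proc_le) simp
  finally show ?thesis unfolding A_def[symmetric] measure_def by (intro enn2real_leI) simp_all
qed

end
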